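(* Let $V$ be a unital $\mathbb Z$-fold algebra with identity $1$, and let $M$ be a module over $V$. If $a,b\in V$ satisfy skew-symmetry for $T_1$ ($T_1a=a_{(-2)}1$), then the fields $Y_M(a,z)$ and $Y_M(b,z)$ on $M$ are mutually local. In particular, if $V$ is a vertex algebra then any two fields $Y_M(a,z),Y_M(b,z)$, $a,b\in V$, are mutually local.
   Context: $\mathbb K$ of characteristic $0$; super vector spaces, parity $\tilde a$, $\zeta=-1$. A $\mathbb Z$-fold algebra is a vector space $V$ with even products $a_{(n)}b$ ($n\in\mathbb Z$); it is unital with identity $1$ if $1_{(n)}a=\delta_{n,-1}a$ for all $n$, and $a_{(n)}1=0$ ($n\ge0$), $a_{(-1)}1=a$. For a vector space $M$, $\mathcal F_z(M)$ denotes the holomorphic fields on $M$: $a(z)=\sum_{n\in\mathbb Z}a_nz^{-n-1}\in\mathrm{End}(M)[[z^{\pm1}]]$ with $a(z)v\in M((z))$ for all $v$; it is a unital $\mathbb Z$-fold algebra with identity $\mathrm{id}_M$ and products $a(w)_{(n)}b(w):=\mathrm{res}_z\big((z-w)^na(z)b(w)-\zeta^{\tilde a\tilde b}(z-w)^n_{w>z}b(w)a(z)\big)$ ($(z-w)^n$ expanded in nonnegative powers of $w$, $(z-w)^n_{w>z}=(-1)^n(w-z)^n$ in nonnegative powers of $z$, $\mathrm{res}_z$ = coefficient of $z^{-1}$). A module over $V$ is a vector space $M$ with a morphism $Y_M:V\to\mathcal F_z(M)$ of unital $\mathbb Z$-fold algebras. Skew-symmetry for $T$: $a_{(n)}b=0$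 for $n\gg0$ and $\zeta^{\tilde a\tilde b}b_{(n)}a=\sum_{i\ge0}(-1)^{n+1+i}T^{(i)}(a_{(n+i)}b)$ for all $n\in\mathbb Z$ ($T^{(i)}=T^i/i!$). Holomorphic fields $a(z),b(z)$ are mutually local iff $(z-w)^N(a(z)b(w)-\zeta^{\tilde a\tilde b}b(w)a(z))=0$ for some $N\in\mathbb N$. A vertex algebra is a $\mathbb Z$-fold algebra with an even $T$ satisfying $[T,Y(a,z)]=\partial_zY(a,z)$, an identity $1$ with $T1=0$, and mutually local fields $Y(a,z)=\sum a_{(n)}z^{-n-1}$. *)

theory Defs
  imports Complex_Main "HOL-Library.Groups_Big_Fun"
begin

text \<open>A super vector space
  structure is a function P :: bool => set, P False = even part, P True = odd part, with
  the whole space the direct sum of the two subspaces.  Parity addition is exclusive or.\<close>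

definition super_vs :: "('k::field \<Rightarrow> 'v::ab_group_add \<Rightarrow> 'v) \<Rightarrow> (bool \<Rightarrow> 'v set) \<Rightarrow> bool" where
  "super_vs sc P \<longleftrightarrow> vector_space sc
     \<and> (\<forall>p. module.subspace sc (P p))
     \<and> P False \<inter> P True = {0}
     \<and> (\<forall>v. \<exists>x y. x \<in> P False \<and> y \<in> P True \<and> v = x + y)"

definition zeta :: "bool \<Rightarrow> bool \<Rightarrow> 'k::field" where
  "zeta pa pb = (if pa \<and> pb then -1 else 1)"

text \<open>Z-fold algebra: even bilinear products a_(n) b, written prd n a b.\<close>
definition zfold_algebra ::
  "('k::field \<Rightarrow> 'v::ab_group_add \<Rightarrow> 'v) \<Rightarrow> (bool \<Rightarrow> 'v set) \<Rightarrow> (int \<Rightarrow> 'v \<Rightarrow> 'v \<Rightarrow> 'v) \<Rightarrow> bool" where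
  "zfold_algebra sc P prd \<longleftrightarrow> super_vs sc P
     \<and> (\<forall>n a. Vector_Spaces.linear sc sc (prd n a))
     \<and> (\<forall>n b. Vector_Spaces.linear sc sc (\<lambda>a. prd n a b))
     \<and> (\<forall>n p q a b. a \<in> P p \<longrightarrow> b \<in> P q \<longrightarrow> prd n a b \<in> P (p \<noteq> q))"

definition unital_zfold_algebra ::
  "('k::field \<Rightarrow> 'v::ab_group_add \<Rightarrow> 'v) \<Rightarrow> (bool \<Rightarrow> 'v set) \<Rightarrow> (int \<Rightarrow> 'v \<Rightarrow> 'v \<Rightarrow> 'v) \<Rightarrow> 'v \<Rightarrow> bool" where
  "unital_zfold_algebra sc P prd one \<longleftrightarrow> zfold_algebra sc P prd
     \<and> (\<forall>n a. prd n one a = (if n = -1 then a else 0))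
     \<and> (\<forall>n a. n \<ge> 0 \<longrightarrow> prd n a one = 0)
     \<and> (\<forall>a. prd (-1) a one = a)"

text \<open>Formal series a(z) = sum_n a_n z^(-n-1) with coefficients in End(M), represented by
  the coefficient function n |-> a_n.\<close>
type_synonym 'm zfield = "int \<Rightarrow> 'm \<Rightarrow> 'm"

definition hol_field :: "('k::field \<Rightarrow> 'm::ab_group_add \<Rightarrow> 'm) \<Rightarrow> 'm zfield \<Rightarrow> bool" where
  "hol_field scM A \<longleftrightarrow> (\<forall>n. Vector_Spaces.linear scM scM (A n)) \<and> (\<forall>v. \<exists>N. \<forall>n\<ge>N. A n v = 0)"

definition field_parity :: "(bool \<Rightarrow> 'm set) \<Rightarrow> bool \<Rightarrow> 'm zfield \<Rightarrow> bool" where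
  "field_parity PM p A \<longleftrightarrow> (\<forall>n r v. v \<in> PM r \<longrightarrow> A n v \<in> PM (r \<noteq> p))"

text \<open>The n-th product of homogeneous fields A (parity pa) and B (parity pb):
  A(w)_(n) B(w) = res_z ((z-w)^n A(z)B(w) - zeta^(pa pb) (z-w)^n_(w>z) B(w)A(z)),
  written out coefficientwise: its m-th coefficient applied to v is
  sum_(j>=0) (-1)^j (n choose j) A_(n-j) B_(m+j) v
   - zeta^(pa pb) (-1)^n sum_(j>=0) (-1)^j (n choose j) B_(m+n-j) A_j v
  (both sums are finite for holomorphic fields).\<close>
definition fprod :: "('k::field_char_0 \<Rightarrow> 'm::ab_group_add \<Rightarrow> 'm) \<Rightarrow> bool \<Rightarrow> bool \<Rightarrow> int
     \<Rightarrow> 'm zfield \<Rightarrow> 'm zfield \<Rightarrow> 'm zfield" where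
  "fprod scM pa pb n A B = (\<lambda>m v.
      Sum_any (\<lambda>j::nat. scM ((-1) ^ j * (of_int n gchoose j)) (A (n - int j) (B (m + int j) v)))
    - scM (zeta pa pb * ((-1) powi n))
        (Sum_any (\<lambda>j::nat. scM ((-1) ^ j * (of_int n gchoose j)) (B (m + n - int j) (A (int j) v)))))"

text \<open>Identity of F_z(M): the field id_M (coefficient id_M at z^0, i.e. n = -1).\<close>
definition id_field :: "'m::zero zfield" where
  "id_field = (\<lambda>n. if n = -1 then id else (\<lambda>_. 0))"

text \<open>Module over a unital Z-fold algebra: Y_M : V -> F_z(M) is an even linear map
  preserving products and identity.  (Preservation of products is required for
  homogeneous arguments; by bilinearity this is the same as for all arguments.)\<close>
definition zfold_module ::
  "('k::field_char_0 \<Rightarrow> 'v::ab_group_add \<Rightarrow> 'v) \<Rightarrow> (bool \<Rightarrow> 'v set) \<Rightarrow> (int \<Rightarrow> 'v \<Rightarrow> 'v \<Rightarrow> 'v) \<Rightarrow> 'v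
   \<Rightarrow> ('k \<Rightarrow> 'm::ab_group_add \<Rightarrow> 'm) \<Rightarrow> (bool \<Rightarrow> 'm set) \<Rightarrow> ('v \<Rightarrow> 'm zfield) \<Rightarrow> bool" where
  "zfold_module sc P prd one scM PM Y \<longleftrightarrow> super_vs scM PM
     \<and> (\<forall>a. hol_field scM (Y a))
     \<and> (\<forall>c a b n v. Y (sc c a + b) n v = scM c (Y a n v) + Y b n v)
     \<and> (\<forall>p a. a \<in> P p \<longrightarrow> field_parity PM p (Y a))
     \<and> (\<forall>n p q a b. a \<in> P p \<longrightarrow> b \<in> P q \<longrightarrow> Y (prd n a b) = fprod scM p q n (Y a) (Y b))
     \<and> Y one = id_field"

definition T1 :: "(int \<Rightarrow> 'v \<Rightarrow> 'v \<Rightarrow> 'v) \<Rightarrow> 'v \<Rightarrow> 'v \<Rightarrow> 'v" where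
  "T1 prd one = (\<lambda>a. prd (-2) a one)"

definition divided_power :: "('k::field_char_0 \<Rightarrow> 'v \<Rightarrow> 'v) \<Rightarrow> ('v \<Rightarrow> 'v) \<Rightarrow> nat \<Rightarrow> 'v \<Rightarrow> 'v" where
  "divided_power sc T i a = sc (inverse (fact i)) ((T ^^ i) a)"

definition skew_symmetric ::
  "('k::field_char_0 \<Rightarrow> 'v::ab_group_add \<Rightarrow> 'v) \<Rightarrow> (int \<Rightarrow> 'v \<Rightarrow> 'v \<Rightarrow> 'v) \<Rightarrow> ('v \<Rightarrow> 'v)
    \<Rightarrow> bool \<Rightarrow> bool \<Rightarrow> 'v \<Rightarrow> 'v \<Rightarrow> bool" where
  "skew_symmetric sc prd T pa pb a b \<longleftrightarrow>
     (\<exists>N. \<forall>n\<ge>N. prd n a b = 0)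
   \<and> (\<forall>n. sc (zeta pa pb) (prd n b a)
          = Sum_any (\<lambda>i::nat. sc ((-1) powi (n + 1 + int i)) (divided_power sc T i (prd (n + int i) a b))))"

text \<open>Mutual locality of homogeneous fields A (parity pa), B (parity pb):
  (z-w)^N (A(z)B(w) - zeta^(pa pb) B(w)A(z)) = 0, written coefficientwise
  (coefficient of z^(-p-1) w^(-q-1)).\<close>
definition mutually_local :: "('k::field \<Rightarrow> 'm::ab_group_add \<Rightarrow> 'm) \<Rightarrow> bool \<Rightarrow> bool
     \<Rightarrow> 'm zfield \<Rightarrow> 'm zfield \<Rightarrow> bool" where
  "mutually_local scM pa pb A B \<longleftrightarrow> (\<exists>N::nat. \<forall>p q v.
     (\<Sum>j\<le>N. scM ((-1) ^ j * of_nat (N choose j))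
        (A (p + int N - int j) (B (q + int j) v)
         - scM (zeta pa pb) (B (q + int j) (A (p + int N - int j) v)))) = 0)"

text \<open>Vertex algebra (V, T, 1, Y) with Y(a,z) = sum_n a_(n) z^(-n-1).\<close>
definition vertex_algebra ::
  "('k::field_char_0 \<Rightarrow> 'v::ab_group_add \<Rightarrow> 'v) \<Rightarrow> (bool \<Rightarrow> 'v set) \<Rightarrow> (int \<Rightarrow> 'v \<Rightarrow> 'v \<Rightarrow> 'v) \<Rightarrow> 'v
    \<Rightarrow> ('v \<Rightarrow> 'v) \<Rightarrow> bool" where
  "vertex_algebra sc P prd one T \<longleftrightarrow> zfold_algebra sc P prd
     \<and> Vector_Spaces.linear sc sc T
     \<and> (\<forall>p a. a \<in> P p \<longrightarrow> T a \<in> P p)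
     \<and> (\<forall>n a b. T (prd n a b) - prd n a (T b) = sc (- of_int n) (prd (n - 1) a b))
     \<and> (\<forall>n a. prd n one a = (if n = -1 then a else 0))
     \<and> (\<forall>n a. n \<ge> 0 \<longrightarrow> prd n a one = 0)
     \<and> (\<forall>a. prd (-1) a one = a)
     \<and> T one = 0
     \<and> (\<forall>a. hol_field sc (\<lambda>n. prd n a))
     \<and> (\<forall>p q a b. a \<in> P p \<longrightarrow> b \<in> P q \<longrightarrow> mutually_local sc p q (\<lambda>n. prd n a) (\<lambda>n. prd n b))"

end

theory Submission
  imports Defs "HOL-Computational_Algebra.Formal_Power_Series"
begin

text \<open>Fix v and record the coefficients of Y(a,z)Y(b,w)v and of zeta Y(b,w)Y(a,z)v as two
  double sequences X and W; X vanishes for large w-index, W for large z-index.  The n-th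
  products of Y a and Y b only depend on X and W, and multiplying both by (z-w) raises n by
  one.  Since Y turns T_1 into d/dz, skew-symmetry of a and b becomes an identity between the
  products of (X, W) and those of the swapped pair (W, X).  This identity, together with the
  vanishing of the products for n \<ge> N, forces (z-w)^N X = (z-w)^N W.  After multiplying by
  (z-w)^N it suffices to treat N = 0: the products with n \<ge> 0 give X = W on the half plane
  p \<ge> 0, the identity transfers this to q \<ge> 0, and on the remaining quadrant the difference
  is killed by the products with n < 0, which the identity determines by downward induction.
  Conversely, (z-w)^N X = (z-w)^N W implies the identity; for the coefficients a_(p) b_(q) 1
  of a vertex algebra this derives skew-symmetry from locality.\<close>

lemma Sum_any_nat_eq_sum_lessThan:
  fixes f :: "nat \<Rightarrow> 'a::comm_monoid_add"
  assumes "\<And>j. K \<le> j \<Longrightarrow> f j = 0"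
  shows "Sum_any f = (\<Sum>j<K. f j)"
proof (rule Sum_any.expand_superset)
  show "{j. f j \<noteq> 0} \<subseteq> {..<K}" using assms by (auto simp: not_less[symmetric])
qed simp

lemma finite_nonzero_nat:
  fixes f :: "nat \<Rightarrow> 'a::zero"
  assumes "\<And>i. K \<le> i \<Longrightarrow> f i = 0"
  shows "finite {i. f i \<noteq> 0}"
proof (rule finite_subset)
  show "{i. f i \<noteq> 0} \<subseteq> {..<K}" using assms by (auto simp: not_less[symmetric])
qed simp

lemma Sum_any_eq_single:
  assumes "\<And>j. j \<noteq> x \<Longrightarrow> f j = 0"
  shows "Sum_any f = f x"
proof -
  have "Sum_any f = Sum_any (\<lambda>j. if j = x then f j else 0)"
    by (rule Sum_any.cong) (use assms in auto)
  then show ?thesis by simp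
qed

lemma Sum_any_uminus:
  fixes f :: "'b \<Rightarrow> 'a::ab_group_add"
  shows "Sum_any (\<lambda>i. - f i) = - Sum_any f"
  by (simp add: Sum_any.expand_set sum_negf)

lemma Sum_any_diff:
  fixes f g :: "'b \<Rightarrow> 'a::ab_group_add"
  assumes "finite {i. f i \<noteq> 0}" "finite {i. g i \<noteq> 0}"
  shows "Sum_any (\<lambda>i. f i - g i) = Sum_any f - Sum_any g"
proof -
  have "Sum_any (\<lambda>i. f i + (- g i)) = Sum_any f + Sum_any (\<lambda>i. - g i)"
    by (rule Sum_any.distrib) (use assms in auto)
  then show ?thesis by (simp add: Sum_any_uminus)
qed

lemma Sum_any_reindex_inj:
  fixes g :: "'b \<Rightarrow> 'a::comm_monoid_add" and h :: "'c \<Rightarrow> 'a"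
  assumes "inj f" "\<And>j. h (f j) = g j" "\<And>a. a \<notin> range f \<Longrightarrow> h a = 0"
  shows "Sum_any g = Sum_any h"
proof -
  have supp: "{a. h a \<noteq> 0} = f ` {j. g j \<noteq> 0}"
    using assms(2,3) by (auto simp: image_iff) (metis rangeE)
  have "Sum_any h = sum h (f ` {j. g j \<noteq> 0})" by (simp add: Sum_any.expand_set supp)
  also have "\<dots> = sum (h \<circ> f) {j. g j \<noteq> 0}"
    by (rule sum.reindex) (use assms(1) in \<open>auto intro: inj_on_subset\<close>)
  also have "\<dots> = Sum_any g" by (simp add: Sum_any.expand_set assms(2) o_def)
  finally show ?thesis ..
qed

lemma linear_simps:
  assumes "Vector_Spaces.linear s1 s2 f"
  shows "f (x + y) = f x + f y" "f (s1 c x) = s2 c (f x)" "f 0 = 0" "f (sum g A) = (\<Sum>a\<in>A. f (g a))"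
proof -
  interpret Vector_Spaces.linear s1 s2 f by fact
  show "f (x + y) = f x + f y" "f (s1 c x) = s2 c (f x)" "f 0 = 0" "f (sum g A) = (\<Sum>a\<in>A. f (g a))"
    by (simp_all add: add scale sum)
qed

lemma minus_one_power_int_eq: "(-1::'k::field) powi e = (if even e then 1 else -1)"
  by (simp add: power_int_minus_left)

lemma zeta_commute: "zeta pa pb = zeta pb pa"
  by (auto simp: zeta_def)

lemma zeta_mult_self [simp]: "zeta pa pb * zeta pa pb = (1::'k::field)"
  by (auto simp: zeta_def)

section \<open>Signed binomial coefficients and the formal delta function\<close>

definition signed_binom :: "int \<Rightarrow> nat \<Rightarrow> 'k::field_char_0" where
  "signed_binom n j = (-1) ^ j * (of_int n gchoose j)"

lemma signed_binom_0 [simp]: "signed_binom n 0 = 1"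
  by (simp add: signed_binom_def)

lemma signed_binom_Suc:
  "signed_binom (n + 1) (Suc j) = (signed_binom n (Suc j) - signed_binom n j :: 'k::field_char_0)"
  unfolding signed_binom_def using gbinomial_Suc_Suc[of "of_int n :: 'k" j] by (simp add: algebra_simps)

lemma signed_binom_of_nat: "signed_binom (int N) j = (-1) ^ j * of_nat (N choose j)"
  by (simp add: signed_binom_def binomial_gbinomial)

lemma signed_binom_minus_one [simp]: "signed_binom (-1) i = (1::'k::field_char_0)"
proof -
  have "((-1::'k) gchoose i) = (-1) ^ i * (of_nat i gchoose i)"
    by (subst gbinomial_negated_upper) simp
  also have "(of_nat i :: 'k) gchoose i = 1" using binomial_gbinomial[of i i, where 'a='k] by simp
  finally show ?thesis by (simp add: signed_binom_def)
qed

lemma signed_binom_absorb: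
  "signed_binom k j * (of_nat j - of_int k)
      = (of_nat (Suc j) * signed_binom k (Suc j) :: 'k::field_char_0)"
proof -
  have absorb: "(of_int k - of_nat j) * ((of_int k :: 'k) gchoose j)
      = of_nat (Suc j) * (of_int k gchoose Suc j)"
    using gbinomial_mult_1[of "of_int k :: 'k" j] by (simp add: algebra_simps)
  have "signed_binom k j * (of_nat j - of_int k)
      = - ((-1) ^ j * ((of_int k - of_nat j) * ((of_int k :: 'k) gchoose j)))"
    unfolding signed_binom_def by (simp add: algebra_simps)
  also have "\<dots> = of_nat (Suc j) * signed_binom k (Suc j)"
    unfolding absorb signed_binom_def by (simp add: algebra_simps)
  finally show ?thesis .
qed

lemma signed_binom_eq_falling_factorial:
  "signed_binom m i = inverse (fact i) * ((-1) ^ i * (\<Prod>t<i. of_int m - of_nat t :: 'k::field_char_0))"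
  unfolding signed_binom_def gbinomial_prod_rev by (simp add: atLeast0LessThan field_simps)

lemma gbinomial_minus_two: "(-1) ^ j * ((- 2::'k::field_char_0) gchoose j) = of_nat j + 1"
proof -
  have "((- 2::'k::field_char_0) gchoose j) = (-1) ^ j * ((of_nat j + 1) gchoose j)"
    by (subst gbinomial_negated_upper) simp
  also have "((of_nat j + 1 :: 'k) gchoose j) = of_nat j + 1"
    using binomial_gbinomial[of "Suc j" j, where 'a='k] by (simp add: add.commute)
  finally show ?thesis by simp
qed

text \<open>The coefficient of z^a w^(k-a) in (z-w)^k minus its expansion in the domain |w| > |z|;
  it vanishes for k \<ge> 0 and is a divided derivative of the formal delta function for k < 0.\<close>
definition delta_coeff :: "int \<Rightarrow> int \<Rightarrow> 'k::field_char_0" where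
  "delta_coeff k a = (if a \<le> k then signed_binom k (nat (k - a)) else 0)
     - (if 0 \<le> a then (-1) powi k * signed_binom k (nat a) else 0)"

lemma delta_coeff_nonneg:
  assumes "0 \<le> k"
  shows "delta_coeff k a = (0::'k::field_char_0)"
proof -
  obtain K where k: "k = int K" using assms by (metis nonneg_int_cases)
  consider "a < 0" | A where "a = int A" "A \<le> K" | A where "a = int A" "K < A"
  proof (cases "a < 0")
    case False
    then obtain A where "a = int A" using nonneg_int_cases by (metis not_less)
    then show ?thesis using that(2,3) by (cases "A \<le> K") auto
  qed (use that(1) in blast)
  then show ?thesis
  proof cases
    case 1
    then have "K < nat (k - a)" using k by auto
    then show ?thesis using 1 by (simp add: delta_coeff_def signed_binom_of_nat k binomial_eq_0)
  next
    case (2 A)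
    have "nat (int K - int A) = K - A" using 2 by auto
    moreover have "K choose (K - A) = K choose A" using 2 by (simp add: binomial_symmetric[symmetric])
    moreover have "even (K - A) \<longleftrightarrow> (even K \<longleftrightarrow> even A)" using 2 by (auto simp: even_diff_nat)
    ultimately show ?thesis using 2 unfolding delta_coeff_def k
      by (simp add: signed_binom_of_nat minus_one_power_iff minus_one_power_int_eq)
  next
    case (3 A)
    then show ?thesis unfolding delta_coeff_def k by (simp add: signed_binom_of_nat binomial_eq_0)
  qed
qed

lemma gbinomial_minus_one_minus:
  "(of_int (-1 - int l) gchoose A :: 'k::field_char_0) = (-1) ^ A * (of_nat (A + l) gchoose l)"
proof -
  have "(of_int (-1 - int l) gchoose A :: 'k) = (-1) ^ A * (of_nat (A + l) gchoose A)"
    by (subst gbinomial_negated_upper) (simp add: algebra_simps)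
  also have "(of_nat (A + l) gchoose A :: 'k) = of_nat (A + l) gchoose l"
    by (metis add_diff_cancel_left' binomial_gbinomial binomial_symmetric le_add1)
  finally show ?thesis .
qed

lemma delta_coeff_neg: "delta_coeff (-1 - int l) a = (of_int (-a - 1) gchoose l :: 'k::field_char_0)"
proof -
  consider "a \<le> -1 - int l" | "-1 - int l < a" "a < 0" | A where "a = int A"
  proof (cases "a < 0")
    case False
    then show ?thesis using that(3) nonneg_int_cases by (metis not_less)
  qed (use that(1,2) in force)
  then show ?thesis
  proof cases
    case 1
    define d where "d = nat (-1 - int l - a)"
    have a: "a = -1 - int l - int d" using 1 unfolding d_def by auto
    have "delta_coeff (-1 - int l) a = (-1) ^ d * (of_int (-1 - int l) gchoose d)"
      using 1 unfolding delta_coeff_def signed_binom_def d_def by simp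
    also have "\<dots> = (of_nat (d + l) gchoose l)"
      unfolding gbinomial_minus_one_minus by simp
    also have "\<dots> = (of_int (-a - 1) gchoose l)"
      unfolding a by simp
    finally show ?thesis .
  next
    case 2
    then have "0 \<le> -a - 1" by simp
    then obtain e where e: "-a - 1 = int e" using nonneg_int_cases by blast
    have "e < l" using 2 e by linarith
    then show ?thesis using 2 unfolding delta_coeff_def
      by (simp add: e binomial_gbinomial[symmetric] binomial_eq_0)
  next
    case (3 A)
    have sign: "- ((-1::'k) powi (-1 - int l)) = (-1) ^ l"
      by (simp add: minus_one_power_int_eq minus_one_power_iff)
    have "delta_coeff (-1 - int l) a = - ((-1) powi (-1 - int l) * signed_binom (-1 - int l) A)"
      using 3 unfolding delta_coeff_def by simp
    also have "\<dots>
        = (- ((-1::'k) powi (-1 - int l))) * ((-1) ^ A * (-1) ^ A) * (of_nat (A + l) gchoose l)"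
      unfolding signed_binom_def gbinomial_minus_one_minus by (simp add: algebra_simps)
    also have "\<dots> = (-1) ^ l * (of_nat (A + l) gchoose l)"
      unfolding sign by (simp add: power_add[symmetric])
    also have "\<dots> = (of_int (-a - 1) gchoose l)"
      by (subst (2) gbinomial_negated_upper) (simp add: 3 algebra_simps)
    finally show ?thesis .
  qed
qed

lemma delta_coeff_shift_eq_0:
  assumes "nat (- n) \<le> i"
  shows "delta_coeff (n + int i) a = 0"
  using assms by (intro delta_coeff_nonneg) linarith

lemma sum_delta_coeff_shift:
  "Sum_any (\<lambda>i::nat. (-1) powi (n + 1 + int i) * signed_binom m i * delta_coeff (n + int i) a)
     = (delta_coeff n (n + m - a) :: 'k::field_char_0)"
proof (cases "0 \<le> n")
  case True
  then show ?thesis by (simp add: delta_coeff_nonneg)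
next
  case False
  define k where "k = nat (- n - 1)"
  have n: "n = -1 - int k" using False unfolding k_def by simp
  have "Sum_any (\<lambda>i::nat. (-1) powi (n + 1 + int i) * signed_binom m i * delta_coeff (n + int i) a)
      = (\<Sum>i\<le>k. (-1) powi (n + 1 + int i) * signed_binom m i * delta_coeff (n + int i) a :: 'k)"
    unfolding lessThan_Suc_atMost[symmetric]
    by (rule Sum_any_nat_eq_sum_lessThan) (simp add: delta_coeff_nonneg n)
  also have "\<dots> = (\<Sum>i\<le>k. (-1) ^ k * ((of_int m gchoose i) * (of_int (-a - 1) gchoose (k - i))))"
  proof (intro sum.cong refl)
    fix i assume "i \<in> {..k}"
    then have ni: "n + int i = -1 - int (k - i)" and "even (n + 1 + int i) \<longleftrightarrow> (even i \<longleftrightarrow> even k)"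
      by (auto simp: n)
    then have "(-1::'k) powi (n + 1 + int i) * (-1) ^ i = (-1) ^ k"
      by (simp add: minus_one_power_int_eq minus_one_power_iff)
    moreover have "(-1) powi (n + 1 + int i) * signed_binom m i * delta_coeff (n + int i) a
        = ((-1::'k) powi (n + 1 + int i) * (-1) ^ i)
          * ((of_int m gchoose i) * (of_int (-a - 1) gchoose (k - i)))"
      unfolding ni delta_coeff_neg signed_binom_def by (simp only: mult_ac)
    ultimately show "(-1) powi (n + 1 + int i) * signed_binom m i * delta_coeff (n + int i) a
        = (-1) ^ k * ((of_int m gchoose i) * (of_int (-a - 1) gchoose (k - i)) :: 'k)"
      by simp
  qed
  also have "\<dots> = (-1) ^ k * ((of_int m + of_int (-a - 1)) gchoose k)"
    by (simp add: sum_distrib_left[symmetric] gbinomial_Vandermonde atMost_atLeast0)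
  also have "\<dots> = delta_coeff n (n + m - a)"
    unfolding n delta_coeff_neg by (subst (2) gbinomial_negated_upper) (simp add: algebra_simps)
  finally show ?thesis .
qed

section \<open>Double sequences and their products\<close>

text \<open>A double sequence X stands for the formal distribution
  sum_(p,q) X p q z^(-p-1) w^(-q-1).\<close>
type_synonym 'm dseq = "int \<Rightarrow> int \<Rightarrow> 'm"

definition swap_zw :: "'m dseq \<Rightarrow> 'm dseq" where
  "swap_zw X = (\<lambda>p q. X q p)"

text \<open>mul_zw X is (z-w) X.\<close>
definition mul_zw :: "'m::ab_group_add dseq \<Rightarrow> 'm dseq" where
  "mul_zw X p q = X (p + 1) q - X p (q + 1)"

definition w_bounded :: "int \<Rightarrow> 'm::zero dseq \<Rightarrow> bool" where
  "w_bounded Q X \<longleftrightarrow> (\<forall>p q. Q \<le> q \<longrightarrow> X p q = 0)"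

definition z_bounded :: "int \<Rightarrow> 'm::zero dseq \<Rightarrow> bool" where
  "z_bounded P W \<longleftrightarrow> (\<forall>p q. P \<le> p \<longrightarrow> W p q = 0)"

definition neg_quadrant_supported :: "'m::zero dseq \<Rightarrow> bool" where
  "neg_quadrant_supported R \<longleftrightarrow> (\<forall>p q. 0 \<le> p \<or> 0 \<le> q \<longrightarrow> R p q = 0)"

lemma w_bounded_iff_z_bounded_swap: "w_bounded Q X \<longleftrightarrow> z_bounded Q (swap_zw X)"
  and z_bounded_iff_w_bounded_swap: "z_bounded P W \<longleftrightarrow> w_bounded P (swap_zw W)"
  by (auto simp: w_bounded_def z_bounded_def swap_zw_def)

lemma w_bounded_mul_zw: "w_bounded Q X \<Longrightarrow> w_bounded Q (mul_zw X)"
  by (simp add: w_bounded_def mul_zw_def)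

lemma z_bounded_mul_zw: "z_bounded P W \<Longrightarrow> z_bounded P (mul_zw W)"
  by (simp add: z_bounded_def mul_zw_def)

lemma w_bounded_mul_zw_pow: "w_bounded Q X \<Longrightarrow> w_bounded Q ((mul_zw ^^ k) X)"
  by (induction k) (auto simp: w_bounded_mul_zw)

lemma z_bounded_mul_zw_pow: "z_bounded P W \<Longrightarrow> z_bounded P ((mul_zw ^^ k) W)"
  by (induction k) (auto simp: z_bounded_mul_zw)

lemma swap_zw_mul_zw: "swap_zw (mul_zw X) = (\<lambda>p q. - mul_zw (swap_zw X) p q)"
  by (auto simp: fun_eq_iff swap_zw_def mul_zw_def)

lemma finite_antidiagonal_support:
  assumes "w_bounded Q U" "z_bounded P U"
  shows "finite {a. U a (s - a) \<noteq> 0}"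
proof (rule finite_subset)
  show "{a. U a (s - a) \<noteq> 0} \<subseteq> {s - Q + 1..P - 1}"
  proof
    fix a assume "a \<in> {a. U a (s - a) \<noteq> 0}"
    then have "\<not> P \<le> a" "\<not> Q \<le> s - a" using assms unfolding w_bounded_def z_bounded_def by auto
    then show "a \<in> {s - Q + 1..P - 1}" by auto
  qed
qed simp

locale vector_space_char_0 = vector_space scale
  for scale :: "'k::field_char_0 \<Rightarrow> 'm::ab_group_add \<Rightarrow> 'm" (infixr "*s" 75)
begin

lemma Sum_any_scale_right: "Sum_any (\<lambda>i. c *s f i) = c *s Sum_any f"
proof (cases "c = 0")
  case False
  then have "{i. c *s f i \<noteq> 0} = {i. f i \<noteq> 0}" by auto
  then show ?thesis by (simp add: Sum_any.expand_set scale_sum_right)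
qed simp

lemma Sum_any_scale_left:
  assumes "finite {i. c i \<noteq> 0}"
  shows "Sum_any (\<lambda>i. c i *s x) = Sum_any c *s x"
proof -
  have "Sum_any (\<lambda>i. c i *s x) = (\<Sum>i\<in>{i. c i \<noteq> 0}. c i *s x)"
    by (rule Sum_any.expand_superset) (use assms in auto)
  then show ?thesis by (simp add: Sum_any.expand_set scale_sum_left)
qed

lemma sum_signed_binom_plus_one:
  "(\<Sum>j<Suc K. signed_binom (n + 1) j *s f j)
     = (\<Sum>j<Suc K. signed_binom n j *s (f j - f (Suc j))) + signed_binom n K *s f (Suc K)"
proof (induction K)
  case 0
  then show ?case by (simp add: scale_right_diff_distrib)
next
  case (Suc K)
  have "(\<Sum>j<Suc (Suc K). signed_binom (n + 1) j *s f j)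
      = (\<Sum>j<Suc K. signed_binom n j *s (f j - f (Suc j))) + signed_binom n K *s f (Suc K)
        + (signed_binom n (Suc K) - signed_binom n K) *s f (Suc K)"
    by (simp only: sum.lessThan_Suc[of _ "Suc K"] Suc signed_binom_Suc)
  also have "\<dots> = (\<Sum>j<Suc (Suc K). signed_binom n j *s (f j - f (Suc j)))
      + signed_binom n (Suc K) *s f (Suc (Suc K))"
    by (simp only: sum.lessThan_Suc[of _ "Suc K"]) (simp add: algebra_simps del: sum.lessThan_Suc)
  finally show ?case .
qed

lemma mul_zw_pow_eq_sum:
  "(mul_zw ^^ N) X p q = (\<Sum>j<Suc N. signed_binom (int N) j *s X (p + int N - int j) (q + int j))"
proof (induction N arbitrary: p q)
  case 0
  then show ?case by simp
next
  case (Suc N)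
  define f where "f j = X (p + int N + 1 - int j) (q + int j)" for j
  have "(mul_zw ^^ Suc N) X p q = (mul_zw ^^ N) X (p + 1) q - (mul_zw ^^ N) X p (q + 1)"
    by (simp add: mul_zw_def)
  also have "\<dots> = (\<Sum>j<Suc N. signed_binom (int N) j *s (f j - f (Suc j)))"
    unfolding Suc.IH by (simp add: f_def sum_subtractf scale_right_diff_distrib algebra_simps)
  also have "\<dots> = (\<Sum>j<Suc (Suc N). signed_binom (int N) j *s (f j - f (Suc j)))
      + signed_binom (int N) (Suc N) *s f (Suc (Suc N))"
    by (simp add: signed_binom_of_nat binomial_eq_0)
  also have "\<dots> = (\<Sum>j<Suc (Suc N). signed_binom (int N + 1) j *s f j)"
    by (rule sum_signed_binom_plus_one[symmetric])
  also have "\<dots>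
      = (\<Sum>j<Suc (Suc N). signed_binom (int (Suc N)) j *s X (p + int (Suc N) - int j) (q + int j))"
    by (simp add: f_def algebra_simps)
  finally show ?case .
qed

lemma mutually_local_iff_mul_zw_pow:
  "mutually_local scale pa pb A B \<longleftrightarrow>
     (\<exists>N. \<forall>v. (mul_zw ^^ N) (\<lambda>p q. A p (B q v))
       = (mul_zw ^^ N) (\<lambda>p q. zeta pa pb *s B q (A p v)))"
proof -
  define X where "X v p q = A p (B q v)" for v p q
  define W where "W v p q = zeta pa pb *s B q (A p v)" for v p q
  have diff: "(mul_zw ^^ N) (X v) p q - (mul_zw ^^ N) (W v) p q
      = (\<Sum>j\<le>N. ((-1) ^ j * of_nat (N choose j)) *s
          (X v (p + int N - int j) (q + int j) - W v (p + int N - int j) (q + int j)))" for N v p q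
    unfolding mul_zw_pow_eq_sum sum_subtractf[symmetric] signed_binom_of_nat lessThan_Suc_atMost
    by (simp add: scale_right_diff_distrib)
  have "(mul_zw ^^ N) (X v) p q = (mul_zw ^^ N) (W v) p q \<longleftrightarrow>
      (\<Sum>j\<le>N. ((-1) ^ j * of_nat (N choose j)) *s
          (X v (p + int N - int j) (q + int j) - W v (p + int N - int j) (q + int j))) = 0"
    for N v p q
    by (subst eq_iff_diff_eq_0) (simp only: diff)
  then show ?thesis
    unfolding mutually_local_def fun_eq_iff X_def W_def by blast
qed

text \<open>The m-th coefficient of res_z ((z-w)^n X - (z-w)^n_(w>z) W), as in fprod.\<close>
definition nprod :: "int \<Rightarrow> 'm dseq \<Rightarrow> 'm dseq \<Rightarrow> int \<Rightarrow> 'm" where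
  "nprod n X W m = Sum_any (\<lambda>j::nat. signed_binom n j *s X (n - int j) (m + int j))
     - ((-1) powi n) *s Sum_any (\<lambda>j::nat. signed_binom n j *s W (int j) (m + n - int j))"

lemma nprod_eq_sum:
  assumes "w_bounded Q X" "z_bounded P W" "Q - m \<le> int K" "P \<le> int K"
  shows "nprod n X W m = (\<Sum>j<K. signed_binom n j *s X (n - int j) (m + int j))
     - ((-1) powi n) *s (\<Sum>j<K. signed_binom n j *s W (int j) (m + n - int j))"
proof -
  have "Sum_any (\<lambda>j::nat. signed_binom n j *s X (n - int j) (m + int j))
      = (\<Sum>j<K. signed_binom n j *s X (n - int j) (m + int j))"
    by (rule Sum_any_nat_eq_sum_lessThan) (use assms in \<open>auto simp: w_bounded_def\<close>)
  moreover have "Sum_any (\<lambda>j::nat. signed_binom n j *s W (int j) (m + n - int j))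
      = (\<Sum>j<K. signed_binom n j *s W (int j) (m + n - int j))"
    by (rule Sum_any_nat_eq_sum_lessThan) (use assms in \<open>auto simp: z_bounded_def\<close>)
  ultimately show ?thesis unfolding nprod_def by simp
qed

lemma nprod_0: "nprod 0 X W m = X 0 m - W 0 m"
proof -
  have "Sum_any (\<lambda>j::nat. signed_binom 0 j *s X (0 - int j) (m + int j)) = X 0 m"
    by (subst Sum_any_nat_eq_sum_lessThan[where K=1]) (auto simp: signed_binom_def gbinomial_0_left)
  moreover have "Sum_any (\<lambda>j::nat. signed_binom 0 j *s W (int j) (m + 0 - int j)) = W 0 m"
    by (subst Sum_any_nat_eq_sum_lessThan[where K=1]) (auto simp: signed_binom_def gbinomial_0_left)
  ultimately show ?thesis unfolding nprod_def by simp
qed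

lemma nprod_uminus: "nprod n (\<lambda>p q. - X p q) (\<lambda>p q. - W p q) m = - nprod n X W m"
  by (simp add: nprod_def Sum_any_uminus)

lemma nprod_scale: "nprod n (\<lambda>p q. c *s X p q) (\<lambda>p q. c *s W p q) m = c *s nprod n X W m"
proof -
  have "Sum_any (\<lambda>j::nat. signed_binom n j *s c *s X (n - int j) (m + int j))
      = c *s Sum_any (\<lambda>j::nat. signed_binom n j *s X (n - int j) (m + int j))"
    "Sum_any (\<lambda>j::nat. signed_binom n j *s c *s W (int j) (m + n - int j))
      = c *s Sum_any (\<lambda>j::nat. signed_binom n j *s W (int j) (m + n - int j))"
    unfolding Sum_any_scale_right[symmetric] by (simp_all add: mult.commute)
  then show ?thesis unfolding nprod_def by (simp add: scale_right_diff_distrib mult.commute)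
qed

lemma nprod_diff:
  assumes "w_bounded Q X1" "z_bounded P W1" "w_bounded Q X2" "z_bounded P W2"
  shows "nprod n (\<lambda>p q. X1 p q - X2 p q) (\<lambda>p q. W1 p q - W2 p q) m
    = nprod n X1 W1 m - nprod n X2 W2 m"
proof -
  define K where "K = nat (Q - m) + nat P"
  have K: "Q - m \<le> int K" "P \<le> int K" unfolding K_def by auto
  have "w_bounded Q (\<lambda>p q. X1 p q - X2 p q)" "z_bounded P (\<lambda>p q. W1 p q - W2 p q)"
    using assms by (auto simp: w_bounded_def z_bounded_def)
  note sums = nprod_eq_sum[OF this K] nprod_eq_sum[OF assms(1,2) K] nprod_eq_sum[OF assms(3,4) K]
  show ?thesis unfolding sums
    by (simp only: scale_right_diff_distrib sum_subtractf) (simp add: algebra_simps)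
qed

lemma fprod_eq_nprod:
  "fprod scale pa pb n A B m v
     = nprod n (\<lambda>p q. A p (B q v)) (\<lambda>p q. zeta pa pb *s B q (A p v)) m"
proof -
  have "Sum_any (\<lambda>j::nat. signed_binom n j *s zeta pa pb *s B (m + n - int j) (A (int j) v))
      = zeta pa pb *s Sum_any (\<lambda>j::nat. signed_binom n j *s B (m + n - int j) (A (int j) v))"
    unfolding Sum_any_scale_right[symmetric] by (simp add: mult.commute)
  then show ?thesis
    unfolding fprod_def nprod_def by (simp add: signed_binom_def mult.commute)
qed

lemma nprod_mul_zw:
  assumes X: "w_bounded Q X" and W: "z_bounded P W"
  shows "nprod n (mul_zw X) (mul_zw W) m = nprod (n + 1) X W m"
proof -
  define K where "K = nat (Q - m) + nat P"
  have K: "Q - m \<le> int K" "P \<le> int K" unfolding K_def by auto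
  have "(\<Sum>j<Suc K. signed_binom (n + 1) j *s X (n + 1 - int j) (m + int j))
      = (\<Sum>j<Suc K. signed_binom n j
          *s (X (n + 1 - int j) (m + int j) - X (n - int j) (m + int (Suc j))))"
    using sum_signed_binom_plus_one[where K=K and n=n and f="\<lambda>j. X (n + 1 - int j) (m + int j)"] X K
    by (simp add: w_bounded_def algebra_simps)
  also have "\<dots> = (\<Sum>j<Suc K. signed_binom n j *s mul_zw X (n - int j) (m + int j))"
    by (simp add: mul_zw_def algebra_simps)
  finally have sum_X: "(\<Sum>j<Suc K. signed_binom (n + 1) j *s X (n + 1 - int j) (m + int j))
      = (\<Sum>j<Suc K. signed_binom n j *s mul_zw X (n - int j) (m + int j))" .
  have "(\<Sum>j<Suc K. signed_binom (n + 1) j *s W (int j) (m + (n + 1) - int j))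
      = (\<Sum>j<Suc K. signed_binom n j
          *s (W (int j) (m + (n + 1) - int j) - W (int (Suc j)) (m + n - int j)))"
    using sum_signed_binom_plus_one[where K=K and n=n and f="\<lambda>j. W (int j) (m + (n + 1) - int j)"] W K
    by (simp add: z_bounded_def algebra_simps)
  also have "\<dots> = (\<Sum>j<Suc K. - (signed_binom n j *s mul_zw W (int j) (m + n - int j)))"
    by (rule sum.cong) (auto simp: mul_zw_def algebra_simps)
  finally have sum_W: "(\<Sum>j<Suc K. signed_binom (n + 1) j *s W (int j) (m + (n + 1) - int j))
      = - (\<Sum>j<Suc K. signed_binom n j *s mul_zw W (int j) (m + n - int j))"
    by (simp add: sum_negf)
  have "Q - m \<le> int (Suc K)" "P \<le> int (Suc K)" using K by auto
  note sums = nprod_eq_sum[OF X W this]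
    nprod_eq_sum[OF w_bounded_mul_zw[OF X] z_bounded_mul_zw[OF W] this]
  show ?thesis unfolding sums sum_X sum_W
    by (simp add: power_int_add algebra_simps del: sum.lessThan_Suc)
qed

lemma nprod_mul_zw_pow:
  assumes "w_bounded Q X" "z_bounded P W"
  shows "nprod n ((mul_zw ^^ k) X) ((mul_zw ^^ k) W) m = nprod (n + int k) X W m"
proof (induction k arbitrary: n)
  case (Suc k)
  have "nprod n ((mul_zw ^^ Suc k) X) ((mul_zw ^^ Suc k) W) m
      = nprod (n + 1) ((mul_zw ^^ k) X) ((mul_zw ^^ k) W) m"
    using nprod_mul_zw[OF w_bounded_mul_zw_pow[OF assms(1)] z_bounded_mul_zw_pow[OF assms(2)]] by simp
  then show ?case using Suc by (simp add: ac_simps)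
qed simp

text \<open>Row 0 of (z-w)^k X and (z-w)^k W agree for every k, since nprod k X W vanishes;
  mul_zw carries this from row p to row p + 1.\<close>
lemma eq_on_nonneg_if_nprod_vanish:
  assumes X: "w_bounded Q X" and W: "z_bounded P W"
    and vanish: "\<And>n m. 0 \<le> n \<Longrightarrow> nprod n X W m = 0" and "0 \<le> p"
  shows "X p q = W p q"
proof -
  have "(mul_zw ^^ k) X (int t) q = (mul_zw ^^ k) W (int t) q" for t k q
  proof (induction t arbitrary: k q)
    case 0
    show ?case using nprod_mul_zw_pow[OF X W, of 0 k q] vanish[of "int k" q] by (simp add: nprod_0)
  next
    case (Suc t)
    have "(mul_zw ^^ k) F (int (Suc t)) q
        = (mul_zw ^^ Suc k) F (int t) q + (mul_zw ^^ k) F (int t) (q + 1)"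
      for F :: "'m dseq"
      by (simp add: mul_zw_def add.commute)
    then show ?case using Suc[of "Suc k" q] Suc[of k "q + 1"] by simp
  qed
  then show ?thesis using \<open>0 \<le> p\<close> by (metis funpow_0 nonneg_int_cases)
qed

lemma nprod_self_nonneg:
  assumes "w_bounded Q U" "z_bounded P U" "0 \<le> n"
  shows "nprod n U U m = 0"
  using nprod_mul_zw_pow[OF assms(1,2), of 0 "nat n" m] assms(3) by (simp add: nprod_0)

lemma nprod_self_eq_delta_sum:
  assumes X: "w_bounded Q U" and W: "z_bounded P U"
  shows "nprod k U U r = Sum_any (\<lambda>a. delta_coeff k a *s U a (k + r - a))"
proof -
  have fin: "finite {a. U a (k + r - a) \<noteq> 0}" by (rule finite_antidiagonal_support[OF X W])
  have first: "Sum_any (\<lambda>j::nat. signed_binom k j *s U (k - int j) (r + int j))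
      = Sum_any (\<lambda>a. if a \<le> k then signed_binom k (nat (k - a)) *s U a (k + r - a) else 0)"
  proof (rule Sum_any_reindex_inj[where f="\<lambda>j. k - int j"])
    fix a assume "a \<notin> range (\<lambda>j. k - int j)"
    moreover have "a \<le> k \<Longrightarrow> a = k - int (nat (k - a))" by simp
    ultimately show "(if a \<le> k then signed_binom k (nat (k - a)) *s U a (k + r - a) else 0) = 0"
      by (metis rangeI)
  qed (auto simp: inj_def algebra_simps)
  have second: "Sum_any (\<lambda>j::nat. signed_binom k j *s U (int j) (r + k - int j))
      = Sum_any (\<lambda>a. if 0 \<le> a then signed_binom k (nat a) *s U a (k + r - a) else 0)"
  proof (rule Sum_any_reindex_inj[where f="int"])
    fix a assume "a \<notin> range int"
    moreover have "0 \<le> a \<Longrightarrow> a = int (nat a)" by simp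
    ultimately show "(if 0 \<le> a then signed_binom k (nat a) *s U a (k + r - a) else 0) = 0"
      by (metis rangeI)
  qed (auto simp: inj_def algebra_simps)
  have "nprod k U U r
      = Sum_any (\<lambda>a. if a \<le> k then signed_binom k (nat (k - a)) *s U a (k + r - a) else 0)
      - Sum_any (\<lambda>a. (-1) powi k *s (if 0 \<le> a then signed_binom k (nat a) *s U a (k + r - a) else 0))"
    unfolding nprod_def first second Sum_any_scale_right ..
  also have "\<dots> = Sum_any (\<lambda>a. (if a \<le> k then signed_binom k (nat (k - a)) *s U a (k + r - a) else 0)
      - (-1) powi k *s (if 0 \<le> a then signed_binom k (nat a) *s U a (k + r - a) else 0))"
    by (rule Sum_any_diff[symmetric]; rule finite_subset[OF _ fin]) auto
  also have "\<dots> = Sum_any (\<lambda>a. delta_coeff k a *s U a (k + r - a))"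
    by (rule Sum_any.cong) (simp add: delta_coeff_def scale_left_diff_distrib)
  finally show ?thesis .
qed

lemma nprod_swap_self_eq_delta_sum:
  assumes "w_bounded Q U" "z_bounded P U"
  shows "nprod n (swap_zw U) (swap_zw U) m = Sum_any (\<lambda>a. delta_coeff n (n + m - a) *s U a (n + m - a))"
proof -
  have "nprod n (swap_zw U) (swap_zw U) m = Sum_any (\<lambda>b. delta_coeff n b *s swap_zw U b (n + m - b))"
    by (rule nprod_self_eq_delta_sum[OF assms(2)[unfolded z_bounded_iff_w_bounded_swap]
        assms(1)[unfolded w_bounded_iff_z_bounded_swap]])
  also have "\<dots> = Sum_any (\<lambda>a. delta_coeff n (n + m - a) *s U a (n + m - a))"
  proof (rule Sum_any.reindex_cong[where l="\<lambda>a. n + m - a"])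
    show "bij (\<lambda>a::int. n + m - a)"
      by (rule o_bij[where g="\<lambda>a. n + m - a"]) (simp_all add: fun_eq_iff)
  qed (simp add: swap_zw_def o_def)
  finally show ?thesis .
qed

section \<open>The skew-symmetry identity\<close>

text \<open>For X, W the coefficients of Y(a,z)Y(b,w)v and zeta Y(b,w)Y(a,z)v this is skew-symmetry
  of a and b seen through Y: the left side is the m-th coefficient of zeta Y(b_(n) a), and
  signed_binom m i is what Y makes of the divided power T^(i).\<close>
definition skew_identity :: "'m dseq \<Rightarrow> 'm dseq \<Rightarrow> bool" where
  "skew_identity X W \<longleftrightarrow> (\<forall>n m. nprod n (swap_zw W) (swap_zw X) m
     = Sum_any (\<lambda>i::nat. (-1) powi (n + 1 + int i) *s signed_binom m i
         *s nprod (n + int i) X W (m - int i)))"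

lemma skew_identity_mul_zw_iff:
  assumes X: "w_bounded Q X" and W: "z_bounded P W"
  shows "skew_identity (mul_zw X) (mul_zw W) \<longleftrightarrow> skew_identity X W"
proof -
  have lhs: "nprod n (swap_zw (mul_zw W)) (swap_zw (mul_zw X)) m
      = - nprod (n + 1) (swap_zw W) (swap_zw X) m" for n m
    using nprod_mul_zw[OF W[unfolded z_bounded_iff_w_bounded_swap]
        X[unfolded w_bounded_iff_z_bounded_swap]]
    by (simp add: swap_zw_mul_zw nprod_uminus)
  have rhs: "Sum_any (\<lambda>i::nat. (-1) powi (n + 1 + int i) *s signed_binom m i
        *s nprod (n + int i) (mul_zw X) (mul_zw W) (m - int i))
      = - Sum_any (\<lambda>i::nat. (-1) powi (n + 1 + 1 + int i) *s signed_binom m i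
        *s nprod (n + 1 + int i) X W (m - int i))" for n m
    unfolding Sum_any_uminus[symmetric]
    by (rule Sum_any.cong) (simp add: nprod_mul_zw[OF X W] power_int_add ac_simps)
  have "skew_identity (mul_zw X) (mul_zw W) \<longleftrightarrow> (\<forall>n m. nprod (n + 1) (swap_zw W) (swap_zw X) m
      = Sum_any (\<lambda>i::nat. (-1) powi (n + 1 + 1 + int i) *s signed_binom m i
        *s nprod (n + 1 + int i) X W (m - int i)))"
    unfolding skew_identity_def lhs rhs neg_equal_iff_equal ..
  also have "\<dots> \<longleftrightarrow> skew_identity X W"
    unfolding skew_identity_def
  proof safe
    fix n m
    assume "\<forall>n m. nprod (n + 1) (swap_zw W) (swap_zw X) m
      = Sum_any (\<lambda>i::nat. (-1) powi (n + 1 + 1 + int i) *s signed_binom m i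
        *s nprod (n + 1 + int i) X W (m - int i))"
    from this[rule_format, of "n - 1" m]
    show "nprod n (swap_zw W) (swap_zw X) m
      = Sum_any (\<lambda>i::nat. (-1) powi (n + 1 + int i) *s signed_binom m i
          *s nprod (n + int i) X W (m - int i))"
      by simp
  qed simp
  finally show ?thesis .
qed

lemma skew_identity_mul_zw_pow_iff:
  assumes "w_bounded Q X" "z_bounded P W"
  shows "skew_identity ((mul_zw ^^ k) X) ((mul_zw ^^ k) W) \<longleftrightarrow> skew_identity X W"
proof (induction k)
  case (Suc k)
  then show ?case
    using skew_identity_mul_zw_iff[OF w_bounded_mul_zw_pow[OF assms(1)]
        z_bounded_mul_zw_pow[OF assms(2)]]
    by simp
qed simp

text \<open>Both sides reduce to the same sum over the antidiagonal; the inner sum of coefficients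
  is Vandermonde's identity (sum_delta_coeff_shift).\<close>
lemma skew_identity_self:
  assumes X: "w_bounded Q U" and W: "z_bounded P U"
  shows "skew_identity U U"
  unfolding skew_identity_def
proof (intro allI)
  fix n m
  define c :: "nat \<Rightarrow> int \<Rightarrow> 'k" where "c i a
      = (-1) powi (n + 1 + int i) * signed_binom m i * delta_coeff (n + int i) a" for i a
  have c_zero: "c i a = 0" if "nat (- n) \<le> i" for i a
    using that by (simp add: c_def delta_coeff_shift_eq_0)
  then have c_supp: "i < nat (- n)" if "c i a \<noteq> 0" for i a
    using that not_le by blast
  have c_fin: "finite {i. c i a \<noteq> 0}" for a
    using c_zero by (rule finite_nonzero_nat)
  have fin: "finite {a. U a (n + m - a) \<noteq> 0}" by (rule finite_antidiagonal_support[OF X W])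
  have "Sum_any (\<lambda>i::nat. (-1) powi (n + 1 + int i) *s signed_binom m i
      *s nprod (n + int i) U U (m - int i))
      = Sum_any (\<lambda>i. Sum_any (\<lambda>a. c i a *s U a (n + m - a)))"
    by (rule Sum_any.cong)
      (simp add: c_def nprod_self_eq_delta_sum[OF X W] Sum_any_scale_right[symmetric] algebra_simps)
  also have "\<dots> = Sum_any (\<lambda>a. Sum_any (\<lambda>i. c i a *s U a (n + m - a)))"
  proof (rule Sum_any.swap[where C="{..<nat (- n)} \<times> {a. U a (n + m - a) \<noteq> 0}"])
    show "{i. \<exists>a. c i a *s U a (n + m - a) \<noteq> 0} \<times> {a. \<exists>i. c i a *s U a (n + m - a) \<noteq> 0}
        \<subseteq> {..<nat (- n)} \<times> {a. U a (n + m - a) \<noteq> 0}"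
      using c_supp by auto
  qed (use fin in simp)
  also have "\<dots> = Sum_any (\<lambda>a. delta_coeff n (n + m - a) *s U a (n + m - a))"
  proof (rule Sum_any.cong)
    fix a
    show "Sum_any (\<lambda>i. c i a *s U a (n + m - a)) = delta_coeff n (n + m - a) *s U a (n + m - a)"
      using c_fin by (simp add: Sum_any_scale_left c_def sum_delta_coeff_shift)
  qed
  finally show "nprod n (swap_zw U) (swap_zw U) m
      = Sum_any (\<lambda>i::nat. (-1) powi (n + 1 + int i) *s signed_binom m i
          *s nprod (n + int i) U U (m - int i))"
    unfolding nprod_swap_self_eq_delta_sum[OF X W] by simp
qed

lemma skew_identity_diff:
  assumes X1: "w_bounded Q X1" and W1: "z_bounded P W1"
    and X2: "w_bounded Q X2" and W2: "z_bounded P W2"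
    and vanish1: "\<And>k m. N \<le> k \<Longrightarrow> nprod k X1 W1 m = 0"
    and vanish2: "\<And>k m. N \<le> k \<Longrightarrow> nprod k X2 W2 m = 0"
    and "skew_identity X1 W1" "skew_identity X2 W2"
  shows "skew_identity (\<lambda>p q. X1 p q - X2 p q) (\<lambda>p q. W1 p q - W2 p q)"
  unfolding skew_identity_def
proof (intro allI)
  fix n m
  define f where "f X W i
      = (-1) powi (n + 1 + int i) *s signed_binom m i *s nprod (n + int i) X W (m - int i)"
    for X W :: "'m dseq" and i :: nat
  have fin: "finite {i. f X W i \<noteq> 0}" if vanish: "\<And>k m. N \<le> k \<Longrightarrow> nprod k X W m = 0" for X W
    by (rule finite_nonzero_nat[of "nat (N - n)"]) (simp add: f_def vanish)
  have swap_diff: "swap_zw (\<lambda>p q. F p q - G p q)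
      = (\<lambda>p q. swap_zw F p q - swap_zw G p q)" for F G :: "'m dseq"
    by (simp add: swap_zw_def fun_eq_iff)
  have "nprod n (swap_zw (\<lambda>p q. W1 p q - W2 p q)) (swap_zw (\<lambda>p q. X1 p q - X2 p q)) m
      = nprod n (swap_zw W1) (swap_zw X1) m - nprod n (swap_zw W2) (swap_zw X2) m"
    unfolding swap_diff
    by (rule nprod_diff[OF W1[unfolded z_bounded_iff_w_bounded_swap]
        X1[unfolded w_bounded_iff_z_bounded_swap]
        W2[unfolded z_bounded_iff_w_bounded_swap] X2[unfolded w_bounded_iff_z_bounded_swap]])
  also have "\<dots> = Sum_any (f X1 W1) - Sum_any (f X2 W2)"
    using assms(7,8) unfolding skew_identity_def f_def by simp
  also have "\<dots> = Sum_any (\<lambda>i. f X1 W1 i - f X2 W2 i)"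
    by (rule Sum_any_diff[symmetric, OF fin fin]) (use vanish1 vanish2 in auto)
  also have "\<dots> = Sum_any (f (\<lambda>p q. X1 p q - X2 p q) (\<lambda>p q. W1 p q - W2 p q))"
    unfolding f_def nprod_diff[OF X1 W1 X2 W2] by (simp add: scale_right_diff_distrib)
  finally show "nprod n (swap_zw (\<lambda>p q. W1 p q - W2 p q)) (swap_zw (\<lambda>p q. X1 p q - X2 p q)) m
      = Sum_any (\<lambda>i::nat. (-1) powi (n + 1 + int i) *s signed_binom m i
          *s nprod (n + int i) (\<lambda>p q. X1 p q - X2 p q) (\<lambda>p q. W1 p q - W2 p q) (m - int i))"
    unfolding f_def .
qed

lemma nprod_neg_quadrant_nonneg:
  assumes R: "neg_quadrant_supported R" and "0 \<le> k"
  shows "nprod k R (\<lambda>p q. 0) r = 0"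
proof -
  obtain K where k: "k = int K" using \<open>0 \<le> k\<close> nonneg_int_cases by blast
  have "signed_binom k j *s R (k - int j) (r + int j) = 0" for j
    using R
    by (cases "j \<le> K") (auto simp: k signed_binom_of_nat binomial_eq_0 neg_quadrant_supported_def)
  then have "Sum_any (\<lambda>j::nat. signed_binom k j *s R (k - int j) (r + int j)) = 0"
    by (simp only: Sum_any.neutral)
  then show ?thesis by (simp add: nprod_def)
qed

text \<open>For R supported in the negative quadrant the left side of the skew identity vanishes,
  so it expresses the product of order n through those of higher order.\<close>
lemma nprod_neg_quadrant_eq_0:
  assumes R: "neg_quadrant_supported R" and sk: "skew_identity R (\<lambda>p q. 0)"
  shows "nprod (-1 - int l) R (\<lambda>p q. 0) r = 0"
proof (induction l arbitrary: r rule: less_induct)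
  case (less l)
  define n where "n = -1 - int l"
  have higher: "nprod (n + int i) R (\<lambda>p q. 0) r' = 0" if "1 \<le> i" for i r'
  proof (cases "i \<le> l")
    case True
    then have "l - i < l" "n + int i = -1 - int (l - i)" using that by (auto simp: n_def)
    then show ?thesis using less.IH by metis
  next
    case False
    then show ?thesis by (intro nprod_neg_quadrant_nonneg[OF R]) (simp add: n_def)
  qed
  have "0 = nprod n (swap_zw (\<lambda>p q. 0)) (swap_zw R) r"
    using R by (simp add: nprod_def swap_zw_def neg_quadrant_supported_def)
  also have "\<dots> = Sum_any (\<lambda>i::nat. (-1) powi (n + 1 + int i) *s signed_binom r i
      *s nprod (n + int i) R (\<lambda>p q. 0) (r - int i))"
    using sk by (simp add: skew_identity_def)
  also have "\<dots> = (-1) powi (n + 1) *s nprod n R (\<lambda>p q. 0) r"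
    by (subst Sum_any_nat_eq_sum_lessThan[where K=1]) (simp_all add: higher)
  finally show ?case by (simp add: n_def)
qed

text \<open>On row q = -1 - t, with R already zero on the rows above, the product of order p < 0
  reduces to its single term R p q.\<close>
lemma neg_quadrant_zero_if_nprod_eq_0:
  assumes R: "neg_quadrant_supported R" and vanish: "\<And>l r. nprod (-1 - int l) R (\<lambda>p q. 0) r = 0"
  shows "R p q = 0"
proof -
  have "R p q = 0" if "- int t \<le> q" for t p q
    using that
  proof (induction t arbitrary: p q)
    case 0
    then show ?case using R by (simp add: neg_quadrant_supported_def)
  next
    case (Suc t)
    show ?case
    proof (cases "- int t \<le> q \<or> 0 \<le> p")
      case True
      then show ?thesis using Suc.IH R by (auto simp: neg_quadrant_supported_def)
    next
      case False
      then have q: "q = -1 - int t" and p: "p = -1 - int (nat (-1 - p))" using Suc.prems by auto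
      have "0 = nprod p R (\<lambda>p q. 0) q" using vanish p by metis
      also have "\<dots> = (\<Sum>j<1. signed_binom p j *s R (p - int j) (q + int j))"
        unfolding nprod_def by (subst Sum_any_nat_eq_sum_lessThan[where K=1]) (use Suc.IH q in auto)
      finally show ?thesis by simp
    qed
  qed
  moreover have "- int (nat (- q)) \<le> q" by simp
  ultimately show ?thesis by blast
qed

lemma eq_if_nprod_vanish:
  assumes X: "w_bounded Q X" and W: "z_bounded P W"
    and vanish: "\<And>n m. 0 \<le> n \<Longrightarrow> nprod n X W m = 0" and sk: "skew_identity X W"
  shows "X = W"
proof -
  have eq_p: "X p q = W p q" if "0 \<le> p" for p q
    using eq_on_nonneg_if_nprod_vanish[OF X W vanish that] .
  have vanish_swap: "nprod n (swap_zw W) (swap_zw X) m = 0" if "0 \<le> n" for n m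
    using sk that by (simp add: skew_identity_def vanish)
  have eq_q: "X p q = W p q" if "0 \<le> q" for p q
    using eq_on_nonneg_if_nprod_vanish[OF W[unfolded z_bounded_iff_w_bounded_swap]
        X[unfolded w_bounded_iff_z_bounded_swap] vanish_swap that, of p]
    by (simp add: swap_zw_def)
  define Q' where "Q' = max Q 0"
  define P' where "P' = max P 0"
  have X': "w_bounded Q' X" "z_bounded P' X" and W': "w_bounded Q' W" "z_bounded P' W"
    using X W eq_p eq_q by (fastforce simp: w_bounded_def z_bounded_def Q'_def P'_def)+
  have "skew_identity (\<lambda>p q. X p q - W p q) (\<lambda>p q. W p q - W p q)"
    using skew_identity_diff[where N=0, OF X'(1) W'(2) W'(1) W'(2) _ _ sk skew_identity_self[OF W']]
    by (simp add: vanish nprod_self_nonneg[OF W'])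
  then have sk_R: "skew_identity (\<lambda>p q. X p q - W p q) (\<lambda>p q. 0)" by simp
  have R: "neg_quadrant_supported (\<lambda>p q. X p q - W p q)"
    using eq_p eq_q by (auto simp: neg_quadrant_supported_def)
  show "X = W"
    using neg_quadrant_zero_if_nprod_eq_0[OF R nprod_neg_quadrant_eq_0[OF R sk_R]]
      by (simp add: fun_eq_iff)
qed

theorem mul_zw_pow_eq_if_skew_identity:
  assumes X: "w_bounded Q X" and W: "z_bounded P W"
    and vanish: "\<And>n m. int N \<le> n \<Longrightarrow> nprod n X W m = 0" and sk: "skew_identity X W"
  shows "(mul_zw ^^ N) X = (mul_zw ^^ N) W"
proof (rule eq_if_nprod_vanish)
  show "w_bounded Q ((mul_zw ^^ N) X)" "z_bounded P ((mul_zw ^^ N) W)"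
    using X W by (simp_all add: w_bounded_mul_zw_pow z_bounded_mul_zw_pow)
  show "nprod n ((mul_zw ^^ N) X) ((mul_zw ^^ N) W) m = 0" if "0 \<le> n" for n m
    using that by (simp add: nprod_mul_zw_pow[OF X W] vanish)
  show "skew_identity ((mul_zw ^^ N) X) ((mul_zw ^^ N) W)"
    using sk by (simp add: skew_identity_mul_zw_pow_iff[OF X W])
qed

theorem skew_identity_if_mul_zw_pow_eq:
  assumes X: "w_bounded Q X" and W: "z_bounded P W" and eq: "(mul_zw ^^ N) X = (mul_zw ^^ N) W"
  shows "skew_identity X W"
proof -
  have "w_bounded Q ((mul_zw ^^ N) W)"
    using w_bounded_mul_zw_pow[OF X, of N] by (simp add: eq)
  then have "skew_identity ((mul_zw ^^ N) W) ((mul_zw ^^ N) W)"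
    using skew_identity_self z_bounded_mul_zw_pow[OF W] by blast
  then show ?thesis using skew_identity_mul_zw_pow_iff[OF X W, of N] by (simp add: eq)
qed

end

section \<open>Unital Z-fold algebras and their modules\<close>

locale unital_zfold =
  fixes sc :: "'k::field_char_0 \<Rightarrow> 'v::ab_group_add \<Rightarrow> 'v"
    and P :: "bool \<Rightarrow> 'v set"
    and prd :: "int \<Rightarrow> 'v \<Rightarrow> 'v \<Rightarrow> 'v"
    and one :: 'v
  assumes unital: "unital_zfold_algebra sc P prd one"
begin

lemma super_vs: "super_vs sc P"
  using unital by (simp add: unital_zfold_algebra_def zfold_algebra_def)

sublocale V: vector_space_char_0 sc
  using super_vs by (simp add: super_vs_def vector_space_char_0_def)

lemma prd_linear: "Vector_Spaces.linear sc sc (prd n a)"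
  using unital by (simp add: unital_zfold_algebra_def zfold_algebra_def)

lemma prd_linear_left: "Vector_Spaces.linear sc sc (\<lambda>a. prd n a b)"
  using unital by (simp add: unital_zfold_algebra_def zfold_algebra_def)

lemma prd_parity: "a \<in> P p \<Longrightarrow> b \<in> P q \<Longrightarrow> prd n a b \<in> P (p \<noteq> q)"
  using unital by (simp add: unital_zfold_algebra_def zfold_algebra_def)

lemma one_prd: "prd n one a = (if n = -1 then a else 0)"
  using unital by (simp add: unital_zfold_algebra_def)

lemma prd_one_nonneg: "0 \<le> n \<Longrightarrow> prd n a one = 0"
  using unital by (simp add: unital_zfold_algebra_def)

lemma prd_minus_one_one [simp]: "prd (-1) a one = a"
  using unital by (simp add: unital_zfold_algebra_def)

lemma prd_zero_left [simp]: "prd n 0 b = 0"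
  using linear_simps(3)[OF prd_linear_left] .

lemma prd_zero_right [simp]: "prd n a 0 = 0"
  using linear_simps(3)[OF prd_linear] .

text \<open>For the odd part y of the identity, the map y_(-1) preserves parity (it is the identity
  minus the map of the even part) and reverses it, so it vanishes and y = y_(-1) 1 = 0.\<close>
lemma one_even: "one \<in> P False"
proof -
  have sub: "V.subspace (P r)" for r using super_vs by (simp add: super_vs_def)
  have disjoint: "P False \<inter> P True = {0}" using super_vs by (simp add: super_vs_def)
  have decomp: "\<exists>x y. x \<in> P False \<and> y \<in> P True \<and> v = x + y" for v
    using super_vs by (simp add: super_vs_def)
  obtain x y where x: "x \<in> P False" and y: "y \<in> P True" and one: "one = x + y"
    using decomp by blast
  have y_hom: "prd (-1) y a = 0" if a: "a \<in> P r" for a r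
  proof -
    have "a = prd (-1) x a + prd (-1) y a"
      using one_prd[of "-1" a] linear_simps(1)[OF prd_linear_left] one by simp
    then have "prd (-1) y a = a - prd (-1) x a" by (simp add: algebra_simps)
    then have "prd (-1) y a \<in> P r"
      using prd_parity[OF x a] sub a by (simp add: V.subspace_diff)
    moreover have "prd (-1) y a \<in> P (\<not> r)" using prd_parity[OF y a] by simp
    ultimately show ?thesis using disjoint by (cases r) auto
  qed
  obtain u w where "u \<in> P False" "w \<in> P True" "one = u + w" using decomp by blast
  then have "prd (-1) y one = 0"
    using y_hom by (simp add: linear_simps(1)[OF prd_linear])
  then have "y = 0" by simp
  then show ?thesis using x one by simp
qed

lemma T1_parity: "c \<in> P p \<Longrightarrow> T1 prd one c \<in> P p"
  using prd_parity[OF _ one_even] by (simp add: T1_def)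

lemma divided_power_T1_zero [simp]: "divided_power sc (T1 prd one) i 0 = 0"
proof -
  have "(T1 prd one ^^ i) 0 = 0" by (induction i) (simp_all add: T1_def)
  then show ?thesis by (simp add: divided_power_def)
qed

end

locale unital_zfold_module = unital_zfold sc P prd one
  for sc :: "'k::field_char_0 \<Rightarrow> 'v::ab_group_add \<Rightarrow> 'v" and P prd one +
  fixes scM :: "'k \<Rightarrow> 'm::ab_group_add \<Rightarrow> 'm"
    and PM :: "bool \<Rightarrow> 'm set"
    and Y :: "'v \<Rightarrow> 'm zfield"
  assumes module: "zfold_module sc P prd one scM PM Y"
begin

sublocale M: vector_space_char_0 scM
  using module by (simp add: zfold_module_def super_vs_def vector_space_char_0_def)

lemma Y_add_scale: "Y (sc c a + b) n v = scM c (Y a n v) + Y b n v"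
  using module by (simp add: zfold_module_def)

lemma Y_zero [simp]: "Y 0 n v = 0"
  using Y_add_scale[of 1 0 0 n v] by simp

lemma Y_scale: "Y (sc c a) n v = scM c (Y a n v)"
  using Y_add_scale[of c a 0 n v] by simp

lemma Y_add: "Y (a + b) n v = Y a n v + Y b n v"
  using Y_add_scale[of 1 a b n v] by simp

lemma Y_Sum_any:
  assumes "finite {i. f i \<noteq> 0}"
  shows "Y (Sum_any f) n v = Sum_any (\<lambda>i. Y (f i) n v)"
proof -
  have Y_sum: "Y (sum f A) n v = (\<Sum>i\<in>A. Y (f i) n v)" for A
    by (induction A rule: infinite_finite_induct) (simp_all add: Y_add)
  have "Y (Sum_any f) n v = (\<Sum>i\<in>{i. f i \<noteq> 0}. Y (f i) n v)"
    by (simp add: Sum_any.expand_set Y_sum)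
  also have "\<dots> = Sum_any (\<lambda>i. Y (f i) n v)"
    by (rule Sum_any.expand_superset[symmetric]) (use assms in auto)
  finally show ?thesis .
qed

lemma Y_hol_field: "hol_field scM (Y a)"
  using module by (simp add: zfold_module_def)

lemma Y_apply_zero [simp]: "Y a n 0 = 0"
proof -
  have "Vector_Spaces.linear scM scM (Y a n)" using Y_hol_field by (simp add: hol_field_def)
  then show ?thesis by (rule linear_simps(3))
qed

lemma Y_prd: "a \<in> P p \<Longrightarrow> b \<in> P q \<Longrightarrow> Y (prd n a b) = fprod scM p q n (Y a) (Y b)"
  using module by (simp add: zfold_module_def)

lemma Y_one: "Y one = id_field"
  using module by (simp add: zfold_module_def)

lemma Y_prd_eq_nprod:
  "a \<in> P pa \<Longrightarrow> b \<in> P pb \<Longrightarrow> Y (prd n a b) m v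
    = M.nprod n (\<lambda>p q. Y a p (Y b q v)) (\<lambda>p q. scM (zeta pa pb) (Y b q (Y a p v))) m"
  by (simp add: Y_prd M.fprod_eq_nprod)

lemma Y_T1:
  assumes c: "c \<in> P p"
  shows "Y (T1 prd one c) m v = scM (- of_int m) (Y c (m - 1) v)"
proof -
  define S1 where "S1
      = Sum_any (\<lambda>j::nat. scM (signed_binom (-2) j) (Y c (-2 - int j) (id_field (m + int j) v)))"
  define S2 where "S2
      = Sum_any (\<lambda>j::nat. scM (signed_binom (-2) j) (id_field (m - 2 - int j) (Y c (int j) v)))"
  have "Y (T1 prd one c) m v = S1 - S2"
    unfolding T1_def Y_prd[OF c one_even] Y_one fprod_def S1_def S2_def signed_binom_def
      by (simp add: zeta_def)
  moreover have S1: "S1 = (if m \<le> -1 then scM (- of_int m) (Y c (m - 1) v) else 0)"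
  proof -
    have "S1 = Sum_any (\<lambda>j::nat. if int j = -1 - m then scM (of_nat j + 1) (Y c (-2 - int j) v) else 0)"
      unfolding S1_def signed_binom_def
        by (rule Sum_any.cong) (auto simp: gbinomial_minus_two id_field_def)
    also have "\<dots>
        = (if m \<le> -1 then scM (of_nat (nat (-1 - m)) + 1) (Y c (-2 - int (nat (-1 - m))) v) else 0)"
      by (subst Sum_any_eq_single[where x="nat (-1 - m)"]) auto
    finally show ?thesis by (simp add: of_nat_nat)
  qed
  moreover have S2: "S2 = (if 1 \<le> m then scM (of_int m) (Y c (m - 1) v) else 0)"
  proof -
    have "S2 = Sum_any (\<lambda>j::nat. if int j = m - 1 then scM (of_nat j + 1) (Y c (int j) v) else 0)"
      unfolding S2_def signed_binom_def
        by (rule Sum_any.cong) (auto simp: gbinomial_minus_two id_field_def)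
    also have "\<dots> = (if 1 \<le> m then scM (of_nat (nat (m - 1)) + 1) (Y c (int (nat (m - 1))) v) else 0)"
      by (subst Sum_any_eq_single[where x="nat (m - 1)"]) auto
    finally show ?thesis by (simp add: of_nat_nat)
  qed
  ultimately show ?thesis by (cases "m = 0") auto
qed

lemma Y_T1_pow:
  assumes c: "c \<in> P p"
  shows "(T1 prd one ^^ i) c \<in> P p \<and> (\<forall>m. Y ((T1 prd one ^^ i) c) m v
      = scM ((-1) ^ i * (\<Prod>t<i. of_int m - of_nat t)) (Y c (m - int i) v))"
proof (induction i)
  case 0
  then show ?case using c by simp
next
  case (Suc i)
  have "Y ((T1 prd one ^^ Suc i) c) m v
      = scM ((-1) ^ Suc i * (\<Prod>t<Suc i. of_int m - of_nat t)) (Y c (m - int (Suc i)) v)" for m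
  proof -
    have "Y ((T1 prd one ^^ Suc i) c) m v
        = scM (- of_int m * ((-1) ^ i * (\<Prod>t<i. of_int (m - 1) - of_nat t))) (Y c (m - 1 - int i) v)"
      using Y_T1[of "(T1 prd one ^^ i) c" p] Suc by simp
    also have "(\<Prod>t<i. of_int (m - 1) - of_nat t) = (\<Prod>t<i. of_int m - of_nat (Suc t) :: 'k)"
      by (rule prod.cong) (simp_all add: algebra_simps)
    also have "- of_int m * ((-1) ^ i * (\<Prod>t<i. of_int m - of_nat (Suc t) :: 'k))
        = (-1) ^ Suc i * (\<Prod>t<Suc i. of_int m - of_nat t)"
      by (simp add: prod.lessThan_Suc_shift del: prod.lessThan_Suc)
    finally show ?thesis by (simp add: algebra_simps)
  qed
  then show ?case using Suc T1_parity by simp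
qed

lemma Y_divided_power_T1:
  assumes "c \<in> P p"
  shows "Y (divided_power sc (T1 prd one) i c) m v = scM (signed_binom m i) (Y c (m - int i) v)"
  using Y_T1_pow[OF assms]
  by (simp add: divided_power_def Y_scale signed_binom_eq_falling_factorial)

lemma skew_identity_if_skew_symmetric:
  assumes a: "a \<in> P pa" and b: "b \<in> P pb"
    and sk: "skew_symmetric sc prd (T1 prd one) pa pb a b"
  shows "M.skew_identity (\<lambda>p q. Y a p (Y b q v)) (\<lambda>p q. scM (zeta pa pb) (Y b q (Y a p v)))"
  unfolding M.skew_identity_def
proof (intro allI)
  fix n m
  define z where "z = (zeta pa pb :: 'k)"
  obtain N where N: "\<And>k. N \<le> k \<Longrightarrow> prd k a b = 0"
    using sk by (auto simp: skew_symmetric_def)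
  let ?t = "\<lambda>i::nat. sc ((-1) powi (n + 1 + int i))
    (divided_power sc (T1 prd one) i (prd (n + int i) a b))"
  have fin: "finite {i. ?t i \<noteq> 0}"
    by (rule finite_nonzero_nat[of "nat (N - n)"]) (simp add: N)
  have swapped: "swap_zw (\<lambda>p q. scM z (Y b q (Y a p v))) = (\<lambda>p q. scM z (Y b p (Y a q v)))"
    "swap_zw (\<lambda>p q. Y a p (Y b q v)) = (\<lambda>p q. scM z (scM z (Y a q (Y b p v))))"
    by (simp_all add: swap_zw_def z_def)
  have "M.nprod n (swap_zw (\<lambda>p q. scM z (Y b q (Y a p v)))) (swap_zw (\<lambda>p q. Y a p (Y b q v))) m
      = scM z (M.nprod n (\<lambda>p q. Y b p (Y a q v)) (\<lambda>p q. scM z (Y a q (Y b p v))) m)"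
    unfolding swapped M.nprod_scale ..
  also have "\<dots> = Y (sc z (prd n b a)) m v"
    by (simp add: Y_scale Y_prd_eq_nprod[OF b a] zeta_commute[of pb] z_def)
  also have "\<dots> = Y (Sum_any ?t) m v"
    using sk unfolding skew_symmetric_def z_def by simp
  also have "\<dots> = Sum_any (\<lambda>i. Y (?t i) m v)"
    by (rule Y_Sum_any[OF fin])
  also have "\<dots> = Sum_any (\<lambda>i::nat. scM ((-1) powi (n + 1 + int i)) (scM (signed_binom m i)
      (M.nprod (n + int i) (\<lambda>p q. Y a p (Y b q v)) (\<lambda>p q. scM z (Y b q (Y a p v))) (m - int i))))"
    by (simp add: Y_scale Y_divided_power_T1[OF prd_parity[OF a b]] Y_prd_eq_nprod[OF a b] z_def)
  finally show "M.nprod n (swap_zw (\<lambda>p q. scM (zeta pa pb) (Y b q (Y a p v))))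
      (swap_zw (\<lambda>p q. Y a p (Y b q v))) m
      = Sum_any (\<lambda>i::nat. scM ((-1) powi (n + 1 + int i)) (scM (signed_binom m i)
          (M.nprod (n + int i) (\<lambda>p q. Y a p (Y b q v))
            (\<lambda>p q. scM (zeta pa pb) (Y b q (Y a p v))) (m - int i))))"
    unfolding z_def .
qed

theorem mutually_local_if_skew_symmetric:
  assumes a: "a \<in> P pa" and b: "b \<in> P pb"
    and sk: "skew_symmetric sc prd (T1 prd one) pa pb a b"
  shows "mutually_local scM pa pb (Y a) (Y b)"
proof -
  obtain N where N: "\<And>k. N \<le> k \<Longrightarrow> prd k a b = 0"
    using sk by (auto simp: skew_symmetric_def)
  have "(mul_zw ^^ nat N) (\<lambda>p q. Y a p (Y b q v))
      = (mul_zw ^^ nat N) (\<lambda>p q. scM (zeta pa pb) (Y b q (Y a p v)))" for v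
  proof -
    obtain Q where "\<forall>q\<ge>Q. Y b q v = 0"
      using Y_hol_field[of b] unfolding hol_field_def by blast
    then have X: "w_bounded Q (\<lambda>p q. Y a p (Y b q v))" by (simp add: w_bounded_def)
    obtain P' where "\<forall>p\<ge>P'. Y a p v = 0"
      using Y_hol_field[of a] unfolding hol_field_def by blast
    then have W: "z_bounded P' (\<lambda>p q. scM (zeta pa pb) (Y b q (Y a p v)))" by (simp add: z_bounded_def)
    show ?thesis
    proof (rule M.mul_zw_pow_eq_if_skew_identity[OF X W])
      show "M.nprod n (\<lambda>p q. Y a p (Y b q v)) (\<lambda>p q. scM (zeta pa pb) (Y b q (Y a p v))) m = 0"
        if "int (nat N) \<le> n" for n m
      proof -
        have "N \<le> n" using that by (auto split: if_splits)
        then show ?thesis by (simp add: Y_prd_eq_nprod[OF a b, symmetric] N)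
      qed
    qed (rule skew_identity_if_skew_symmetric[OF a b sk])
  qed
  then show ?thesis unfolding M.mutually_local_iff_mul_zw_pow by blast
qed

end

section \<open>Skew-symmetry in vertex algebras\<close>

locale vertex_alg =
  fixes sc :: "'k::field_char_0 \<Rightarrow> 'v::ab_group_add \<Rightarrow> 'v"
    and P :: "bool \<Rightarrow> 'v set"
    and prd :: "int \<Rightarrow> 'v \<Rightarrow> 'v \<Rightarrow> 'v"
    and one :: 'v
    and T :: "'v \<Rightarrow> 'v"
  assumes vertex: "vertex_algebra sc P prd one T"

sublocale vertex_alg \<subseteq> unital_zfold
  using vertex by unfold_locales (simp add: unital_zfold_algebra_def vertex_algebra_def)

context vertex_alg
begin

lemma T_linear: "Vector_Spaces.linear sc sc T"
  using vertex by (simp add: vertex_algebra_def)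

lemma T_prd: "T (prd n a b) = prd n a (T b) + sc (- of_int n) (prd (n - 1) a b)"
  using vertex by (simp add: vertex_algebra_def algebra_simps)

lemma T_one [simp]: "T one = 0"
  using vertex by (simp add: vertex_algebra_def)

lemma prd_hol_field: "hol_field sc (\<lambda>n. prd n a)"
  using vertex by (simp add: vertex_algebra_def)

lemma prd_mutually_local:
  "a \<in> P pa \<Longrightarrow> b \<in> P pb \<Longrightarrow> mutually_local sc pa pb (\<lambda>n. prd n a) (\<lambda>n. prd n b)"
  using vertex by (simp add: vertex_algebra_def)

lemma T1_eq_T: "T1 prd one = T"
proof
  fix a
  show "T1 prd one a = T a"
    using T_prd[of "-1" a one] by (simp add: T1_def prd_one_nonneg)
qed

lemma T_divided_power: "T (divided_power sc T i x) = sc (of_nat (Suc i)) (divided_power sc T (Suc i) x)"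
  by (simp add: divided_power_def linear_simps(2)[OF T_linear] del: of_nat_Suc)

lemma divided_power_prd_one: "divided_power sc T r b = prd (-1 - int r) b one"
proof (induction r)
  case (Suc r)
  have "sc (of_nat (Suc r)) (divided_power sc T (Suc r) b) = T (prd (-1 - int r) b one)"
    by (simp only: T_divided_power[symmetric] Suc)
  also have "\<dots> = sc (of_nat (Suc r)) (prd (-1 - int (Suc r)) b one)"
    by (simp add: T_prd algebra_simps)
  finally show ?case by (simp del: of_nat_Suc)
qed (simp add: divided_power_def)

text \<open>The Leibniz rule for the divided powers of T, from T a_(k) = a_(k) T - k a_(k-1).\<close>
lemma divided_power_prd:
  "divided_power sc T i (prd k a x)
     = (\<Sum>j<Suc i. sc (signed_binom k j) (prd (k - int j) a (divided_power sc T (i - j) x)))"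
proof (induction i)
  case 0
  then show ?case by (simp add: divided_power_def)
next
  case (Suc i)
  define F where "F j = prd (k - int j) a (divided_power sc T (Suc i - j) x)" for j
  have T_term: "T (prd (k - int j) a (divided_power sc T (i - j) x))
      = sc (of_nat (Suc i) - of_nat j) (F j) + sc (of_nat j - of_int k) (F (Suc j))"
    if "j < Suc i" for j
  proof -
    have "of_nat (Suc (i - j)) = (of_nat (Suc i) - of_nat j :: 'k)"
      using that by (simp add: of_nat_diff)
    then have "prd (k - int j) a (T (divided_power sc T (i - j) x))
        = sc (of_nat (Suc i) - of_nat j) (F j)"
      using that
      by (simp add: T_divided_power linear_simps(2)[OF prd_linear] F_def Suc_diff_le del: of_nat_Suc)
    moreover have "prd (k - int j - 1) a (divided_power sc T (i - j) x) = F (Suc j)"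
      by (simp add: F_def algebra_simps)
    ultimately show ?thesis
      by (simp add: T_prd algebra_simps)
  qed
  have "sc (of_nat (Suc i)) (divided_power sc T (Suc i) (prd k a x))
      = (\<Sum>j<Suc i. sc (signed_binom k j) (T (prd (k - int j) a (divided_power sc T (i - j) x))))"
    by (simp only: T_divided_power[symmetric] Suc linear_simps(2,4)[OF T_linear])
  also have "\<dots> = (\<Sum>j<Suc i. sc (signed_binom k j * (of_nat (Suc i) - of_nat j)) (F j))
      + (\<Sum>j<Suc i. sc (of_nat (Suc j) * signed_binom k (Suc j)) (F (Suc j)))"
    by (simp add: T_term sum.distrib V.scale_right_distrib signed_binom_absorb mult.assoc)
  also have "(\<Sum>j<Suc i. sc (signed_binom k j * (of_nat (Suc i) - of_nat j)) (F j))
      = (\<Sum>j<Suc (Suc i). sc (signed_binom k j * (of_nat (Suc i) - of_nat j)) (F j))"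
    by simp
  also have "(\<Sum>j<Suc i. sc (of_nat (Suc j) * signed_binom k (Suc j)) (F (Suc j)))
      = (\<Sum>j<Suc (Suc i). sc (of_nat j * signed_binom k j) (F j))"
    by (subst sum.lessThan_Suc_shift[of _ "Suc i"]) simp
  also have "(\<Sum>j<Suc (Suc i). sc (signed_binom k j * (of_nat (Suc i) - of_nat j)) (F j))
      + (\<Sum>j<Suc (Suc i). sc (of_nat j * signed_binom k j) (F j))
      = sc (of_nat (Suc i)) (\<Sum>j<Suc (Suc i). sc (signed_binom k j) (F j))"
    by (simp only: sum.distrib[symmetric] V.scale_left_distrib[symmetric] V.scale_sum_right
        V.scale_scale)
       (simp add: algebra_simps)
  finally show ?case by (simp add: F_def del: of_nat_Suc)
qed

lemma nprod_vacuum_swapped: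
  "V.nprod n (swap_zw (\<lambda>p q. sc z (prd q b (prd p a one)))) (swap_zw (\<lambda>p q. prd p a (prd q b one))) (-1)
     = sc z (prd n b a)"
proof -
  have "Sum_any (\<lambda>j::nat. sc (signed_binom n j) (sc z (prd (n - int j) b (prd (-1 + int j) a one))))
      = sc z (prd n b a)"
    by (subst Sum_any_eq_single[where x=0]) (auto simp: prd_one_nonneg)
  then show ?thesis by (simp add: V.nprod_def swap_zw_def prd_one_nonneg)
qed

lemma nprod_vacuum:
  "V.nprod (n + int i) (\<lambda>p q. prd p a (prd q b one)) (\<lambda>p q. sc z (prd q b (prd p a one))) (-1 - int i)
     = divided_power sc T i (prd (n + int i) a b)"
proof -
  have "Sum_any (\<lambda>j::nat. sc (signed_binom (n + int i) j)
        (prd (n + int i - int j) a (prd (-1 - int i + int j) b one)))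
      = (\<Sum>j<Suc i. sc (signed_binom (n + int i) j)
        (prd (n + int i - int j) a (prd (-1 - int i + int j) b one)))"
    by (rule Sum_any_nat_eq_sum_lessThan) (simp add: prd_one_nonneg)
  also have "\<dots> = divided_power sc T i (prd (n + int i) a b)"
    unfolding divided_power_prd
      by (rule sum.cong) (auto simp: divided_power_prd_one of_nat_diff algebra_simps)
  finally show ?thesis by (simp add: V.nprod_def prd_one_nonneg)
qed

theorem skew_symmetric:
  assumes a: "a \<in> P pa" and b: "b \<in> P pb"
  shows "skew_symmetric sc prd (T1 prd one) pa pb a b"
proof -
  define X where "X p q = prd p a (prd q b one)" for p q
  define W where "W p q = sc (zeta pa pb) (prd q b (prd p a one))" for p q
  have X: "w_bounded 0 X" and W: "z_bounded 0 W"
    by (simp_all add: w_bounded_def z_bounded_def X_def W_def prd_one_nonneg)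
  obtain N where "(mul_zw ^^ N) X = (mul_zw ^^ N) W"
    using prd_mutually_local[OF a b] unfolding V.mutually_local_iff_mul_zw_pow X_def W_def by blast
  then have "V.skew_identity X W" by (rule V.skew_identity_if_mul_zw_pow_eq[OF X W])
  note skew_at = this[unfolded V.skew_identity_def X_def W_def, rule_format]
  have "sc (zeta pa pb) (prd n b a) = Sum_any (\<lambda>i::nat. sc ((-1) powi (n + 1 + int i))
      (divided_power sc (T1 prd one) i (prd (n + int i) a b)))" for n
    using skew_at[of n "-1"] by (simp add: nprod_vacuum_swapped nprod_vacuum T1_eq_T)
  moreover have "\<exists>N. \<forall>n\<ge>N. prd n a b = 0"
    using prd_hol_field[of a] by (simp add: hol_field_def)
  ultimately show ?thesis by (simp add: skew_symmetric_def)
qed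

end

theorem mainTheorem19:
  fixes sc :: "'k::field_char_0 \<Rightarrow> 'v::ab_group_add \<Rightarrow> 'v"
    and P :: "bool \<Rightarrow> 'v set"
    and prd :: "int \<Rightarrow> 'v \<Rightarrow> 'v \<Rightarrow> 'v"
    and one :: 'v
    and scM :: "'k \<Rightarrow> 'm::ab_group_add \<Rightarrow> 'm"
    and PM :: "bool \<Rightarrow> 'm set"
    and Y :: "'v \<Rightarrow> 'm zfield"
  assumes V: "unital_zfold_algebra sc P prd one"
    and M: "zfold_module sc P prd one scM PM Y"
  shows "(\<forall>pa pb a b. a \<in> P pa \<longrightarrow> b \<in> P pb \<longrightarrow> skew_symmetric sc prd (T1 prd one) pa pb a b
            \<longrightarrow> mutually_local scM pa pb (Y a) (Y b))
       \<and> (\<forall>T. vertex_algebra sc P prd one T \<longrightarrow>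
            (\<forall>pa pb a b. a \<in> P pa \<longrightarrow> b \<in> P pb \<longrightarrow> mutually_local scM pa pb (Y a) (Y b)))"
proof -
  interpret unital_zfold_module sc P prd one scM PM Y
    by (intro unital_zfold_module.intro unital_zfold.intro unital_zfold_module_axioms.intro V M)
  have "mutually_local scM pa pb (Y a) (Y b)"
    if "vertex_algebra sc P prd one T" "a \<in> P pa" "b \<in> P pb" for T pa pb a b
  proof -
    interpret vertex_alg sc P prd one T by (rule vertex_alg.intro) fact
    show ?thesis using mutually_local_if_skew_symmetric skew_symmetric that(2,3) by blast
  qed
  then show ?thesis using mutually_local_if_skew_symmetric by blast
qed

end
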